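(* For every prime $p$ there exists a cyclic skew-symmetric linear $(2,p,p)$-AONT: that is, there exist $\tau\in\mathbb{F}_p$ and a $p\times p$ matrix $M$ over $\mathbb{F}_p$ such that $M$ is invertible, every $2\times2$ submatrix of $M$ is invertible, $M$ is in type $p$ standard form, $M$ is $\tau$-skew-symmetric, and $M$ is cyclic.
   Context: A linear $(t,s,q)$-AONT is given by an invertible $s\times s$ matrix $M$ over $\mathbb{F}_q$ (transform $(y_1,\dots,y_s)=(x_1,\dots,x_s)M^{-1}$); $M$ defines one iff every $t\times t$ submatrix is invertible. A $q\times q$ matrix $M$ (rows/columns indexed $1,\dots,q$) is in type $q$ standard form if all its diagonal entries are $0$ and all off-diagonal entries of the first row and first column are $1$. Such an $M$ is $\tau$-skew-symmetric if $M(i,j)+M(j,i)=\tau$ for all $2\le i,j\le q$ with $i\ne j$, and it is cyclic if its lower right $(q-1)\times(q-1)$ submatrix is a circulant matrix (each row is the cyclic shift by one position to the right of the previous row). "Skew-symmetric" means $\tau$-skew-symmetric for some $\tau$. *)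

theory Defs
  imports "Jordan_Normal_Form.Matrix" "Jordan_Normal_Form.DL_Submatrix"
begin

(* Matrices are Jordan_Normal_Form matrices, indexed 0..q-1 (paper: 1..q).
   Paper index i corresponds to index i-1 here. *)

definition AONT_matrix :: "nat \<Rightarrow> nat \<Rightarrow> 'a::field mat \<Rightarrow> bool" where
  "AONT_matrix t s M \<longleftrightarrow> M \<in> carrier_mat s s \<and> invertible_mat M \<and>
     (\<forall>I J. I \<subseteq> {..<s} \<longrightarrow> J \<subseteq> {..<s} \<longrightarrow> card I = t \<longrightarrow> card J = t
        \<longrightarrow> invertible_mat (submatrix M I J))"

definition standard_form :: "nat \<Rightarrow> 'a::field mat \<Rightarrow> bool" where
  "standard_form q M \<longleftrightarrow> M \<in> carrier_mat q q \<and>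
     (\<forall>i<q. M $$ (i, i) = 0) \<and>
     (\<forall>j<q. j \<noteq> 0 \<longrightarrow> M $$ (0, j) = 1 \<and> M $$ (j, 0) = 1)"

definition tau_skew_symmetric :: "nat \<Rightarrow> 'a::field \<Rightarrow> 'a mat \<Rightarrow> bool" where
  "tau_skew_symmetric q \<tau> M \<longleftrightarrow>
     (\<forall>i j. 1 \<le> i \<longrightarrow> i < q \<longrightarrow> 1 \<le> j \<longrightarrow> j < q \<longrightarrow> i \<noteq> j
        \<longrightarrow> M $$ (i, j) + M $$ (j, i) = \<tau>)"

(* lower right (q-1)x(q-1) submatrix C(k,l) = M(k+1,l+1) is circulant:
   row k+1 is row k cyclically shifted one position to the right *)
definition cyclic_mat :: "nat \<Rightarrow> 'a mat \<Rightarrow> bool" where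
  "cyclic_mat q M \<longleftrightarrow>
     (\<forall>k l. k + 1 < q - 1 \<longrightarrow> l < q - 1 \<longrightarrow>
        M $$ (k + 2, (l + 1) mod (q - 1) + 1) = M $$ (k + 1, l + 1))"

end

(*
  Index rows and columns by the elements of F_p in the order 0, 1, g, g^2, ..., g^(p-2) for a
  primitive root g, and let the entry at (x, y) be x / (y - x) for distinct nonzero x, y, with
  zero diagonal and ones elsewhere on the border. Then skew-symmetry with tau = -1 is the identity
  x / (y - x) + y / (x - y) = -1, cyclicity is the invariance of x / (y - x) under
  (x, y) |-> (g x, g y), and the 2 x 2 minors reduce to a cross-ratio computation.

  After flipping the sign of w(0), a kernel vector w becomes
  a function u whose Cauchy transform sum_y u(y) / (y - x) vanishes for every x <> 0. Multiplying
  by x^(k+1), summing over x and using sum_x x^m / (y - x) = m y^(m-1) (a power-sum computation)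
  shows that the moments sum_y u(y) y^k vanish for k < p - 1, because m <> 0 in F_p for 0 < m < p.
  By Fermat, 1 - (y - a)^(p-1) is the indicator of a, so vanishing moments force u to be
  constant, and the border row then forces u = 0.
*)
theory Submission
  imports Defs "Jordan_Normal_Form.Determinant" "HOL-Library.Cardinality"
    "HOL-Number_Theory.Residue_Primitive_Roots"
begin

section \<open>Finite fields\<close>

lemma card_field_ge_2: "2 \<le> card (UNIV :: 'a::{field,finite} set)"
proof -
  have "card {0, 1 :: 'a} \<le> CARD('a)" by (rule card_mono) auto
  then show ?thesis by simp
qed

lemma of_nat_CARD_eq_0: "(of_nat CARD('a) :: 'a::{field,finite}) = 0"
  by (simp add: of_nat_eq_0_iff_char_dvd CHAR_dvd_CARD)

lemma of_nat_CARD_minus_1: "(of_nat (CARD('a) - 1) :: 'a::{field,finite}) = -1"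
  using card_field_ge_2[where 'a = 'a] by (simp add: of_nat_CARD_eq_0)

lemma CHAR_eq_CARD_if_prime:
  assumes "prime (card (UNIV :: 'a::{field,finite} set))"
  shows "CHAR('a) = CARD('a)"
proof -
  have "CHAR('a) = 1 \<or> CHAR('a) = CARD('a)"
    using CHAR_dvd_CARD[where 'a = 'a] assms prime_nat_iff by blast
  then show ?thesis by auto
qed

lemma power_CARD_minus_1:
  fixes x :: "'a::{field,finite}"
  assumes "x \<noteq> 0"
  shows "x ^ (CARD('a) - 1) = 1"
proof -
  let ?U = "UNIV - {0} :: 'a set"
  have "(\<Prod>y\<in>?U. y) = (\<Prod>y\<in>?U. x * y)"
    by (rule prod.reindex_bij_witness[of _ "\<lambda>y. x * y" "\<lambda>y. y / x"]) (use assms in simp_all)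
  also have "\<dots> = x ^ card ?U * (\<Prod>y\<in>?U. y)"
    by (rule prod.distrib[THEN trans]) simp
  also have "card ?U = CARD('a) - 1" by (simp add: card_Diff_singleton)
  finally show ?thesis by simp
qed

lemma inverse_eq_power_CARD_minus_2:
  fixes x :: "'a::{field,finite}"
  assumes "2 < CARD('a)"
  shows "inverse x = x ^ (CARD('a) - 2)"
proof (cases "x = 0")
  case False
  have "CARD('a) - 1 = Suc (CARD('a) - 2)" using assms by linarith
  then have "x ^ (CARD('a) - 2) * x = x ^ (CARD('a) - 1)" by (simp add: power_Suc2)
  then show ?thesis using power_CARD_minus_1[OF False] by (intro inverse_unique) (simp add: mult.commute)
qed (use assms in simp)

lemma sum_nonzero_const:
  fixes c :: "'a::{field,finite}"
  shows "(\<Sum>x\<in>(UNIV :: 'a set). if x = 0 then 0 else c) = - c"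
proof -
  have "(\<Sum>x\<in>(UNIV :: 'a set). if x = 0 then 0 else c) = (\<Sum>x\<in>UNIV - {0 :: 'a}. c)"
    by (rule sum.mono_neutral_cong_right) auto
  also have "\<dots> = of_nat (CARD('a) - 1) * c" by (simp add: card_Diff_singleton)
  also have "\<dots> = - c" by (simp only: of_nat_CARD_minus_1 mult_minus1)
  finally show ?thesis .
qed

lemma power_mod_eq_if_power_eq_1:
  fixes x :: "'a::monoid_mult"
  assumes "x ^ m = 1"
  shows "x ^ (n mod m) = x ^ n"
proof -
  have "x ^ n = (x ^ m) ^ (n div m) * x ^ (n mod m)"
    by (simp flip: power_mult power_add)
  then show ?thesis using assms by simp
qed

definition primitive_element :: "'a::{field,finite} \<Rightarrow> bool" where
  "primitive_element g \<longleftrightarrow> (\<forall>k. g ^ k = 1 \<longleftrightarrow> (CARD('a) - 1) dvd k)"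

lemma primitive_element_exists:
  assumes "prime CARD('a)"
  obtains g :: "'a::{field,finite}" where "primitive_element g"
proof -
  let ?p = "CARD('a)"
  obtain r where r: "residue_primroot ?p r"
    using prime_primitive_root_exists assms prime_gt_1_nat by blast
  then have ord: "ord ?p r = ?p - 1"
    using assms by (simp add: residue_primroot_def totient_prime)
  have "(of_nat r :: 'a) ^ k = 1 \<longleftrightarrow> (?p - 1) dvd k" for k
  proof -
    have "(of_nat r :: 'a) ^ k = 1 \<longleftrightarrow> (of_nat (r ^ k) :: 'a) = of_nat 1" by simp
    also have "\<dots> \<longleftrightarrow> [r ^ k = 1] (mod ?p)"
      by (simp only: of_nat_eq_iff_cong_CHAR CHAR_eq_CARD_if_prime[OF assms])
    also have "\<dots> \<longleftrightarrow> (?p - 1) dvd k" by (simp add: ord_divides' ord)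
    finally show ?thesis .
  qed
  then show ?thesis using that unfolding primitive_element_def by blast
qed

lemma primitive_element_nonzero:
  fixes g :: "'a::{field,finite}"
  assumes "primitive_element g"
  shows "g \<noteq> 0"
proof
  assume "g = 0"
  moreover have "g ^ (CARD('a) - 1) = 1" using assms by (simp add: primitive_element_def)
  ultimately show False using card_field_ge_2[where 'a = 'a] by (simp add: power_0_left)
qed

lemma primitive_element_power_inj:
  fixes g :: "'a::{field,finite}"
  assumes g: "primitive_element g" and "i < CARD('a) - 1" "j < CARD('a) - 1" and "g ^ i = g ^ j"
  shows "i = j"
proof -
  have ordered: "i = j" if "i \<le> j" "j < CARD('a) - 1" "g ^ i = g ^ j" for i j
  proof -
    have "g ^ i * g ^ (j - i) = g ^ j" using \<open>i \<le> j\<close> by (simp flip: power_add)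
    then have "g ^ i * g ^ (j - i) = g ^ i * 1" using \<open>g ^ i = g ^ j\<close> by simp
    then have "g ^ (j - i) = 1" using primitive_element_nonzero[OF g] by simp
    then have "(CARD('a) - 1) dvd (j - i)" using g by (simp add: primitive_element_def)
    moreover have "j - i < CARD('a) - 1" using that by linarith
    ultimately have "j - i = 0" using nat_dvd_not_less by blast
    then show "i = j" using \<open>i \<le> j\<close> by simp
  qed
  show ?thesis using ordered[of i j] ordered[of j i] assms(2-4) by (metis nat_le_linear)
qed

lemma sum_powers_finite_field:
  fixes g :: "'a::{field,finite}"
  assumes g: "primitive_element g"
  shows "(\<Sum>x\<in>UNIV. x ^ n) = (if 0 < n \<and> (CARD('a) - 1) dvd n then -1 else (0::'a))"
proof -
  consider "n = 0" | "0 < n" "(CARD('a) - 1) dvd n" | "0 < n" "\<not> (CARD('a) - 1) dvd n"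
    by blast
  then show ?thesis
  proof cases
    case 1
    then show ?thesis by (simp add: of_nat_CARD_eq_0)
  next
    case 2
    then obtain c where n: "n = (CARD('a) - 1) * c" by blast
    have "x ^ n = (if x = 0 then 0 else 1)" for x :: 'a
    proof (cases "x = 0")
      case False
      then show ?thesis unfolding n power_mult using power_CARD_minus_1[OF False] by simp
    qed (use 2 in simp)
    then show ?thesis using 2 sum_nonzero_const[of "1::'a"] by simp
  next
    case 3
    have "g ^ n * (\<Sum>x\<in>UNIV. x ^ n) = (\<Sum>x\<in>UNIV. (g * x) ^ n)"
      by (simp add: power_mult_distrib sum_distrib_left)
    also have "\<dots> = (\<Sum>x\<in>UNIV. x ^ n)"
      by (rule sum.reindex_bij_witness[of _ "\<lambda>x. x / g" "\<lambda>x. g * x"])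
        (use primitive_element_nonzero[OF g] in simp_all)
    finally have "g ^ n * (\<Sum>x\<in>UNIV. x ^ n) = 1 * (\<Sum>x\<in>UNIV. x ^ n)" by simp
    moreover have "g ^ n \<noteq> 1" using 3 g by (simp add: primitive_element_def)
    ultimately show ?thesis using 3 by simp
  qed
qed

lemma dvd_eq_if_less_double:
  fixes d n :: nat
  assumes "d dvd n" "0 < n" "n < 2 * d"
  shows "n = d"
proof -
  obtain c where n: "n = d * c" using assms(1) by blast
  then have "0 < c" "c < 2" using assms(2,3) by auto
  then show ?thesis by (simp add: n)
qed

section \<open>A Cauchy-type transform\<close>

\<comment> \<open>The term y = x drops out because inverse 0 = 0.\<close>
definition cauchy_transform :: "('a::{field,finite} \<Rightarrow> 'a) \<Rightarrow> 'a \<Rightarrow> 'a" where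
  "cauchy_transform u x = (\<Sum>y\<in>UNIV. u y * inverse (y - x))"

lemma sum_power_mul_inverse_diff:
  fixes g y :: "'a::{field,finite}"
  assumes g: "primitive_element g" and q: "2 < CARD('a)" and m: "0 < m" "m < CARD('a)"
  shows "(\<Sum>x\<in>UNIV. x ^ m * inverse (y - x)) = of_nat m * y ^ (m - 1)"
proof -
  let ?q = "CARD('a)"
  have "(\<Sum>x\<in>UNIV. x ^ m * inverse (y - x)) = (\<Sum>x\<in>UNIV. x ^ m * (y - x) ^ (?q - 2))"
    by (simp only: inverse_eq_power_CARD_minus_2[OF q])
  also have "\<dots> = (\<Sum>t\<in>UNIV. (y - t) ^ m * t ^ (?q - 2))"
    by (rule sum.reindex_bij_witness[of _ "\<lambda>t. y - t" "\<lambda>x. y - x"]) simp_all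
  also have "\<dots> = (\<Sum>t\<in>UNIV. \<Sum>k\<le>m. of_nat (m choose k) * (-1) ^ k * y ^ (m - k) * t ^ (k + (?q - 2)))"
  proof (rule sum.cong[OF refl])
    fix t :: 'a
    have binomial: "(y - t) ^ m = (\<Sum>k\<le>m. of_nat (m choose k) * (- t) ^ k * y ^ (m - k))"
      using binomial_ring[of "- t" y m] by simp
    show "(y - t) ^ m * t ^ (?q - 2)
        = (\<Sum>k\<le>m. of_nat (m choose k) * (-1) ^ k * y ^ (m - k) * t ^ (k + (?q - 2)))"
      unfolding binomial sum_distrib_right
      by (intro sum.cong refl) (simp add: power_add power_minus[of t] mult_ac)
  qed
  also have "\<dots> = (\<Sum>k\<le>m. of_nat (m choose k) * (-1) ^ k * y ^ (m - k) * (\<Sum>t\<in>UNIV. t ^ (k + (?q - 2))))"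
    by (subst sum.swap) (simp add: sum_distrib_left)
  also have "\<dots> = (\<Sum>k\<le>m. if k = 1 then of_nat m * y ^ (m - 1) else 0)"
  proof (rule sum.cong[OF refl])
    fix k assume "k \<in> {..m}"
    then have "k + (?q - 2) < 2 * (?q - 1)" using m by simp
    then have "0 < k + (?q - 2) \<and> (?q - 1) dvd (k + (?q - 2)) \<longleftrightarrow> k = 1"
      using q dvd_eq_if_less_double[of "?q - 1" "k + (?q - 2)"] by auto
    then show "of_nat (m choose k) * (-1) ^ k * y ^ (m - k) * (\<Sum>t\<in>UNIV. t ^ (k + (?q - 2)))
        = (if k = 1 then of_nat m * y ^ (m - 1) else 0)"
      by (simp add: sum_powers_finite_field[OF g])
  qed
  also have "\<dots> = of_nat m * y ^ (m - 1)" using m by simp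
  finally show ?thesis .
qed

lemma moments_vanish_if_cauchy_transform_vanishes:
  fixes u :: "'a::{field,finite} \<Rightarrow> 'a"
  assumes p: "prime CARD('a)" and q: "2 < CARD('a)"
    and transform: "\<And>x. x \<noteq> 0 \<Longrightarrow> cauchy_transform u x = 0"
    and k: "k < CARD('a) - 1"
  shows "(\<Sum>y\<in>UNIV. u y * y ^ k) = 0"
proof -
  obtain g :: 'a where g: "primitive_element g" using primitive_element_exists[OF p] .
  have "x ^ (k + 1) * (\<Sum>y\<in>UNIV. u y * inverse (y - x)) = 0" for x
    using transform[of x] by (cases "x = 0") (simp_all add: cauchy_transform_def)
  then have "0 = (\<Sum>x\<in>UNIV. x ^ (k + 1) * (\<Sum>y\<in>UNIV. u y * inverse (y - x)))"
    by (intro sum.neutral[symmetric]) blast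
  also have "\<dots> = (\<Sum>x\<in>UNIV. \<Sum>y\<in>UNIV. u y * (x ^ (k + 1) * inverse (y - x)))"
    by (simp add: sum_distrib_left mult_ac)
  also have "\<dots> = (\<Sum>y\<in>UNIV. u y * (\<Sum>x\<in>UNIV. x ^ (k + 1) * inverse (y - x)))"
    by (subst sum.swap) (simp add: sum_distrib_left)
  also have "\<dots> = of_nat (k + 1) * (\<Sum>y\<in>UNIV. u y * y ^ k)"
    using sum_power_mul_inverse_diff[OF g q, of "k + 1"] k
    by (simp add: sum_distrib_left mult_ac)
  finally have "of_nat (k + 1) * (\<Sum>y\<in>UNIV. u y * y ^ k) = 0" ..
  moreover have "\<not> CARD('a) dvd (k + 1)" using k by (intro nat_dvd_not_less) auto
  then have "(of_nat (k + 1) :: 'a) \<noteq> 0"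
    by (simp only: of_nat_eq_0_iff_char_dvd CHAR_eq_CARD_if_prime[OF p] not_False_eq_True)
  ultimately show ?thesis by simp
qed

lemma eq_top_moment_if_lower_moments_vanish:
  fixes u :: "'a::{field,finite} \<Rightarrow> 'a"
  assumes moments: "\<And>k. k < CARD('a) - 1 \<Longrightarrow> (\<Sum>y\<in>UNIV. u y * y ^ k) = 0"
  shows "u a = - (\<Sum>y\<in>UNIV. u y * y ^ (CARD('a) - 1))"
proof -
  let ?q = "CARD('a)"
  have q: "0 < ?q - 1" using card_field_ge_2[where 'a = 'a] by simp
  have "(y - a) ^ (?q - 1) = (if y = a then 0 else 1)" for y
    using q power_CARD_minus_1[of "y - a"] by simp
  then have "(\<Sum>y\<in>UNIV. u y * (y - a) ^ (?q - 1)) = (\<Sum>y\<in>UNIV. u y - (if y = a then u y else 0))"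
    by (intro sum.cong) simp_all
  also have "\<dots> = - u a" using moments[of 0] q by (simp add: sum_subtractf)
  finally have indicator: "(\<Sum>y\<in>UNIV. u y * (y - a) ^ (?q - 1)) = - u a" .
  have "(\<Sum>y\<in>UNIV. u y * (y - a) ^ (?q - 1))
      = (\<Sum>y\<in>UNIV. \<Sum>k\<le>?q - 1. of_nat (?q - 1 choose k) * (- a) ^ (?q - 1 - k) * (u y * y ^ k))"
  proof (rule sum.cong[OF refl])
    fix y
    have "(y - a) ^ (?q - 1) = (\<Sum>k\<le>?q - 1. of_nat (?q - 1 choose k) * y ^ k * (- a) ^ (?q - 1 - k))"
      using binomial_ring[of y "- a" "?q - 1"] by simp
    then show "u y * (y - a) ^ (?q - 1)
        = (\<Sum>k\<le>?q - 1. of_nat (?q - 1 choose k) * (- a) ^ (?q - 1 - k) * (u y * y ^ k))"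
      by (simp add: sum_distrib_left mult_ac)
  qed
  also have "\<dots> = (\<Sum>k\<le>?q - 1. of_nat (?q - 1 choose k) * (- a) ^ (?q - 1 - k) * (\<Sum>y\<in>UNIV. u y * y ^ k))"
    by (subst sum.swap) (simp add: sum_distrib_left)
  also have "\<dots> = (\<Sum>k\<le>?q - 1. if k = ?q - 1 then (\<Sum>y\<in>UNIV. u y * y ^ (?q - 1)) else 0)"
    by (rule sum.cong[OF refl]) (auto simp: moments)
  also have "\<dots> = (\<Sum>y\<in>UNIV. u y * y ^ (?q - 1))" by simp
  finally show ?thesis using indicator by simp
qed

section \<open>Matrices indexed by field elements\<close>

lemma invertible_mat_if_kernel_trivial:
  fixes A :: "'a::field mat"
  assumes A: "A \<in> carrier_mat n n"
    and kernel: "\<And>v. v \<in> carrier_vec n \<Longrightarrow> A *\<^sub>v v = 0\<^sub>v n \<Longrightarrow> v = 0\<^sub>v n"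
  shows "invertible_mat A"
proof -
  have "det A \<noteq> 0" using det_0_iff_vec_prod_zero[OF A] kernel by auto
  from det_non_zero_imp_unit[OF A this, of "()"]
  obtain B where "B \<in> carrier_mat n n" "B * A = 1\<^sub>m n" "A * B = 1\<^sub>m n"
    by (auto simp: Units_def ring_mat_def)
  then show ?thesis using A unfolding invertible_mat_def inverts_mat_def by auto
qed

lemma invertible_mat_2x2:
  fixes A :: "'a::field mat"
  assumes A: "A \<in> carrier_mat 2 2"
    and det: "A $$ (0, 0) * A $$ (1, 1) \<noteq> A $$ (0, 1) * A $$ (1, 0)"
  shows "invertible_mat A"
proof (rule invertible_mat_if_kernel_trivial[OF A])
  fix v :: "'a vec"
  assume v: "v \<in> carrier_vec 2" and Av: "A *\<^sub>v v = 0\<^sub>v 2"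
  have row: "A $$ (i, 0) * v $ 0 + A $$ (i, 1) * v $ 1 = 0" if "i < 2" for i
    using arg_cong[OF Av, of "\<lambda>u. u $ i"] that A v by (simp add: scalar_prod_def numeral_2_eq_2)
  have row0: "A $$ (0, 0) * v $ 0 + A $$ (0, 1) * v $ 1 = 0" and
    row1: "A $$ (1, 0) * v $ 0 + A $$ (1, 1) * v $ 1 = 0"
    using row[of 0] row[of 1] by simp_all
  have cramer0: "(A $$ (0, 0) * A $$ (1, 1) - A $$ (0, 1) * A $$ (1, 0)) * v $ 0
      = A $$ (1, 1) * (A $$ (0, 0) * v $ 0 + A $$ (0, 1) * v $ 1)
        - A $$ (0, 1) * (A $$ (1, 0) * v $ 0 + A $$ (1, 1) * v $ 1)"
   and cramer1: "(A $$ (0, 0) * A $$ (1, 1) - A $$ (0, 1) * A $$ (1, 0)) * v $ 1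
      = A $$ (0, 0) * (A $$ (1, 0) * v $ 0 + A $$ (1, 1) * v $ 1)
        - A $$ (1, 0) * (A $$ (0, 0) * v $ 0 + A $$ (0, 1) * v $ 1)"
    by (simp_all add: algebra_simps)
  have "(A $$ (0, 0) * A $$ (1, 1) - A $$ (0, 1) * A $$ (1, 0)) * v $ 0 = 0"
    and "(A $$ (0, 0) * A $$ (1, 1) - A $$ (0, 1) * A $$ (1, 0)) * v $ 1 = 0"
    unfolding cramer0 cramer1 row0 row1 by simp_all
  then have "v $ 0 = 0" "v $ 1 = 0" using det by simp_all
  then show "v = 0\<^sub>v 2" using v by (intro eq_vecI) (auto simp: less_2_cases_iff)
qed

lemma invertible_mat_of_fun:
  fixes f :: "'a::field \<Rightarrow> 'a \<Rightarrow> 'a" and e :: "nat \<Rightarrow> 'a"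
  assumes e: "bij_betw e {..<n} UNIV"
    and kernel: "\<And>w. (\<And>x. (\<Sum>y\<in>UNIV. f x y * w y) = 0) \<Longrightarrow> w = (\<lambda>_. 0)"
  shows "invertible_mat (mat n n (\<lambda>(i, j). f (e i) (e j)))" (is "invertible_mat ?A")
proof (rule invertible_mat_if_kernel_trivial)
  show "?A \<in> carrier_mat n n" by simp
next
  fix v :: "'a vec"
  assume v: "v \<in> carrier_vec n" and Av: "?A *\<^sub>v v = 0\<^sub>v n"
  define w where "w y = v $ inv_into {..<n} e y" for y
  have w_e: "w (e j) = v $ j" if "j < n" for j
    using that bij_betw_imp_inj_on[OF e] by (simp add: w_def inv_into_f_f)
  have "(\<Sum>y\<in>UNIV. f x y * w y) = 0" for x
  proof -
    obtain i where i: "i < n" "x = e i" using e by (metis UNIV_I bij_betw_def imageE lessThan_iff)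
    have "(\<Sum>y\<in>UNIV. f x y * w y) = (\<Sum>j<n. f x (e j) * w (e j))"
      by (rule sum.reindex_bij_betw[OF e, symmetric])
    also have "\<dots> = (?A *\<^sub>v v) $ i"
      using i v by (simp add: w_e scalar_prod_def atLeast0LessThan)
    also have "\<dots> = 0" using Av i by simp
    finally show ?thesis .
  qed
  then have "w = (\<lambda>_. 0)" by (rule kernel)
  then show "v = 0\<^sub>v n" using v w_e by (intro eq_vecI) (auto dest: fun_cong)
qed

lemma invertible_submatrix_2x2_of_fun:
  fixes f :: "'a::field \<Rightarrow> 'a \<Rightarrow> 'a" and e :: "nat \<Rightarrow> 'a"
  assumes e: "inj_on e {..<n}"
    and minor: "\<And>x1 x2 y1 y2. x1 \<noteq> x2 \<Longrightarrow> y1 \<noteq> y2 \<Longrightarrow> f x1 y1 * f x2 y2 \<noteq> f x1 y2 * f x2 y1"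
    and I: "I \<subseteq> {..<n}" "card I = 2" and J: "J \<subseteq> {..<n}" "card J = 2"
  shows "invertible_mat (submatrix (mat n n (\<lambda>(i, j). f (e i) (e j))) I J)"
    (is "invertible_mat (submatrix ?A I J)")
proof (rule invertible_mat_2x2)
  have rows: "{i. i < n \<and> i \<in> I} = I" and cols: "{j. j < n \<and> j \<in> J} = J"
    using I(1) J(1) by auto
  show "submatrix ?A I J \<in> carrier_mat 2 2"
    unfolding carrier_mat_def mem_Collect_eq dim_submatrix dim_row_mat(1) dim_col_mat(1) rows cols I(2) J(2) by simp
  have pick: "pick K a \<in> K" if "a < 2" "card K = 2" for K a
    using pick_in_set_le[of a K] that by simp
  have entry: "submatrix ?A I J $$ (a, b) = f (e (pick I a)) (e (pick J b))"
    if "a < 2" "b < 2" for a b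
  proof -
    have "pick I a < n" "pick J b < n"
      using pick[OF that(1) I(2)] pick[OF that(2) J(2)] I(1) J(1) by (meson lessThan_iff subsetD)+
    then show ?thesis using submatrix_index[of a ?A I b J] rows cols I J that by simp
  qed
  have distinct: "e (pick K 0) \<noteq> e (pick K 1)" if K: "K \<subseteq> {..<n}" "card K = 2" for K
  proof
    assume "e (pick K 0) = e (pick K 1)"
    then have "pick K 0 = pick K 1"
      by (rule inj_onD[OF e]) (use pick[of 0 K] pick[of 1 K] K in auto)
    moreover have "pick K 0 < pick K 1" using pick_mono_le[of 1 K 0] K by simp
    ultimately show False by simp
  qed
  then show "submatrix ?A I J $$ (0, 0) * submatrix ?A I J $$ (1, 1)
      \<noteq> submatrix ?A I J $$ (0, 1) * submatrix ?A I J $$ (1, 0)"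
    using minor[OF distinct[OF I] distinct[OF J]] by (simp add: entry)
qed

definition aont_entry :: "'a::field \<Rightarrow> 'a \<Rightarrow> 'a" where
  "aont_entry x y = (if x = y then 0 else if x = 0 \<or> y = 0 then 1 else x / (y - x))"

lemma aont_entry_eq_0_iff [simp]: "aont_entry x y = 0 \<longleftrightarrow> x = y"
  by (auto simp: aont_entry_def)

lemma aont_entry_zero_left: "aont_entry 0 y = (if y = 0 then 0 else 1)"
  by (simp add: aont_entry_def)

lemma aont_entry_zero_right: "x \<noteq> 0 \<Longrightarrow> aont_entry x 0 = 1"
  by (simp add: aont_entry_def)

lemma aont_entry_nonzero_left:
  "x \<noteq> 0 \<Longrightarrow> aont_entry x y = (if y = 0 then 1 else x * inverse (y - x))"
  by (simp add: aont_entry_def divide_inverse)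

lemma aont_entry_mult_mult: "c \<noteq> 0 \<Longrightarrow> aont_entry (c * x) (c * y) = aont_entry x y"
  by (simp add: aont_entry_def flip: right_diff_distrib)

lemma aont_entry_add_swap:
  assumes "x \<noteq> y" "x \<noteq> 0" "y \<noteq> 0"
  shows "aont_entry x y + aont_entry y x = -1"
proof -
  have "aont_entry x y + aont_entry y x = x / (y - x) + y / (x - y)"
    using assms by (simp add: aont_entry_def)
  also have "\<dots> = x / (y - x) - y / (y - x)"
    by (metis diff_minus_eq_add divide_minus_right minus_diff_eq)
  also have "\<dots> = (x - y) / (y - x)" by (rule diff_divide_distrib[symmetric])
  also have "\<dots> = -1" using assms by (simp add: divide_eq_minus_1_iff)
  finally show ?thesis .
qed

lemma aont_entry_minor_nonzero:
  fixes x1 x2 y1 y2 :: "'a::field"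
  assumes "x1 \<noteq> x2" "y1 \<noteq> y2"
  shows "aont_entry x1 y1 * aont_entry x2 y2 \<noteq> aont_entry x1 y2 * aont_entry x2 y1"
proof (cases "x1 = y1 \<or> x2 = y2 \<or> x1 = y2 \<or> x2 = y1")
  case True
  \<comment> \<open>then exactly one of the two products vanishes\<close>
  then show ?thesis using assms by (metis aont_entry_eq_0_iff mult_eq_0_iff)
next
  case False
  have "x1 * y1 + x2 * y2 - (x1 * y2 + x2 * y1) = (x1 - x2) * (y1 - y2)"
    by (simp add: algebra_simps)
  then have "x1 * y1 + x2 * y2 \<noteq> x1 * y2 + x2 * y1"
    using assms by auto
  with assms False show ?thesis
    by (auto simp: aont_entry_def field_simps)
qed

lemma aont_entry_kernel_trivial:
  fixes w :: "'a::{field,finite} \<Rightarrow> 'a"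
  assumes p: "prime CARD('a)" and kernel: "\<And>x. (\<Sum>y\<in>UNIV. aont_entry x y * w y) = 0"
  shows "w a = 0"
proof (cases "CARD('a) = 2")
  case True
  have U: "{0, 1} = (UNIV :: 'a set)" by (rule card_subset_eq) (simp_all add: True)
  have "w 1 = 0" using kernel[of 0] unfolding U[symmetric] by (simp add: aont_entry_def)
  moreover have "w 0 = 0" using kernel[of 1] unfolding U[symmetric] by (simp add: aont_entry_def)
  moreover have "a \<in> {0, 1}" by (simp add: U)
  ultimately show ?thesis by auto
next
  case False
  then have q: "2 < CARD('a)" using card_field_ge_2[where 'a = 'a] by linarith
  \<comment> \<open>flipping the sign of w 0 absorbs the border column into the Cauchy transform\<close>
  define u where "u y = (if y = 0 then - w 0 else w y)" for y
  have "cauchy_transform u x = 0" if x: "x \<noteq> 0" for x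
  proof -
    have "x * cauchy_transform u x = (\<Sum>y\<in>UNIV. aont_entry x y * w y)"
      unfolding cauchy_transform_def sum_distrib_left
      by (rule sum.cong) (use x in \<open>auto simp: u_def aont_entry_nonzero_left field_simps\<close>)
    then show ?thesis using kernel[of x] x by simp
  qed
  then have "u y = - (\<Sum>y\<in>UNIV. u y * y ^ (CARD('a) - 1))" for y
    by (intro eq_top_moment_if_lower_moments_vanish moments_vanish_if_cauchy_transform_vanishes[OF p q])
  then obtain c where c: "\<And>y. u y = c" by blast
  have "aont_entry 0 y * w y = (if y = 0 then 0 else c)" for y
    using c[of y] by (simp add: aont_entry_zero_left u_def split: if_splits)
  then have "- c = 0" using kernel[of 0] sum_nonzero_const[of c] by simp
  then show "w a = 0" using c[of a] c[of 0] by (simp add: u_def split: if_splits)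
qed

\<comment> \<open>Along this ordering, multiplication by g cyclically shifts the indices 1, ..., q - 1.\<close>
definition power_enum :: "'a::field \<Rightarrow> nat \<Rightarrow> 'a" where
  "power_enum g i = (if i = 0 then 0 else g ^ (i - 1))"

lemma power_enum_nonzero: "primitive_element g \<Longrightarrow> 0 < i \<Longrightarrow> power_enum g i \<noteq> 0"
  by (simp add: power_enum_def primitive_element_nonzero)

lemma inj_on_power_enum:
  fixes g :: "'a::{field,finite}"
  assumes g: "primitive_element g"
  shows "inj_on (power_enum g) {..<CARD('a)}"
proof (rule inj_onI)
  fix i j assume ij: "i \<in> {..<CARD('a)}" "j \<in> {..<CARD('a)}" and eq: "power_enum g i = power_enum g j"
  show "i = j"
  proof (cases "i = 0 \<or> j = 0")
    case True
    then show ?thesis using eq power_enum_nonzero[OF g] by (metis neq0_conv power_enum_def)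
  next
    case False
    then have "g ^ (i - 1) = g ^ (j - 1)" using eq by (simp add: power_enum_def)
    then have "i - 1 = j - 1" by (rule primitive_element_power_inj[OF g, rotated 2]) (use ij False in auto)
    then show ?thesis using False by linarith
  qed
qed

lemma bij_betw_power_enum:
  fixes g :: "'a::{field,finite}"
  assumes "primitive_element g"
  shows "bij_betw (power_enum g) {..<CARD('a)} UNIV"
proof -
  have "card (power_enum g ` {..<CARD('a)}) = CARD('a)"
    using card_image[OF inj_on_power_enum[OF assms]] by simp
  then have "power_enum g ` {..<CARD('a)} = UNIV" by (simp add: card_eq_UNIV_imp_eq_UNIV)
  then show ?thesis using inj_on_power_enum[OF assms] by (simp add: bij_betw_def)
qed

definition aont_mat :: "'a::{field,finite} \<Rightarrow> 'a mat" where
  "aont_mat g = mat CARD('a) CARD('a) (\<lambda>(i, j). aont_entry (power_enum g i) (power_enum g j))"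

lemma aont_mat_carrier: "aont_mat (g :: 'a::{field,finite}) \<in> carrier_mat CARD('a) CARD('a)"
  by (simp add: aont_mat_def)

lemma aont_mat_index:
  fixes g :: "'a::{field,finite}"
  assumes "i < CARD('a)" "j < CARD('a)"
  shows "aont_mat g $$ (i, j) = aont_entry (power_enum g i) (power_enum g j)"
  using assms by (simp add: aont_mat_def)

lemma AONT_matrix_aont_mat:
  assumes p: "prime CARD('a)" and g: "primitive_element (g :: 'a::{field,finite})"
  shows "AONT_matrix 2 CARD('a) (aont_mat g)"
proof -
  have "invertible_mat (aont_mat g)"
    unfolding aont_mat_def
    by (rule invertible_mat_of_fun[OF bij_betw_power_enum[OF g]])
      (use aont_entry_kernel_trivial[OF p] in blast)
  moreover have "invertible_mat (submatrix (aont_mat g) I J)"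
    if "I \<subseteq> {..<CARD('a)}" "J \<subseteq> {..<CARD('a)}" "card I = 2" "card J = 2" for I J
    unfolding aont_mat_def
    by (rule invertible_submatrix_2x2_of_fun[OF inj_on_power_enum[OF g] aont_entry_minor_nonzero])
      (use that in simp_all)
  ultimately show ?thesis by (simp add: AONT_matrix_def aont_mat_carrier)
qed

lemma standard_form_aont_mat:
  assumes "primitive_element g"
  shows "standard_form CARD('a) (aont_mat (g :: 'a::{field,finite}))"
  using power_enum_nonzero[OF assms]
  by (auto simp: standard_form_def aont_mat_carrier aont_mat_index aont_entry_zero_left
      aont_entry_zero_right power_enum_def[of _ 0])

lemma tau_skew_symmetric_aont_mat:
  assumes g: "primitive_element g"
  shows "tau_skew_symmetric CARD('a) (-1) (aont_mat (g :: 'a::{field,finite}))"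
  unfolding tau_skew_symmetric_def
proof (intro allI impI)
  fix i j assume ij: "1 \<le> i" "i < CARD('a)" "1 \<le> j" "j < CARD('a)" "i \<noteq> j"
  then have "power_enum g i \<noteq> power_enum g j" using inj_on_power_enum[OF g] by (auto dest: inj_onD)
  with ij show "aont_mat g $$ (i, j) + aont_mat g $$ (j, i) = -1"
    by (simp add: aont_mat_index aont_entry_add_swap power_enum_nonzero[OF g])
qed

lemma cyclic_mat_aont_mat:
  assumes g: "primitive_element g"
  shows "cyclic_mat CARD('a) (aont_mat (g :: 'a::{field,finite}))"
  unfolding cyclic_mat_def
proof (intro allI impI)
  fix k l assume kl: "k + 1 < CARD('a) - 1" "l < CARD('a) - 1"
  let ?j = "(l + 1) mod (CARD('a) - 1) + 1"
  have "(l + 1) mod (CARD('a) - 1) < CARD('a) - 1" using kl by (intro mod_less_divisor) simp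
  then have j: "?j < CARD('a)" by linarith
  have "g ^ (CARD('a) - 1) = 1" using g by (simp add: primitive_element_def)
  then have shift_col: "power_enum g ?j = g * power_enum g (l + 1)"
    by (simp add: power_enum_def power_mod_eq_if_power_eq_1)
  have shift_row: "power_enum g (k + 2) = g * power_enum g (k + 1)"
    by (simp add: power_enum_def)
  have "aont_mat g $$ (k + 2, ?j) = aont_entry (power_enum g (k + 2)) (power_enum g ?j)"
    by (rule aont_mat_index) (use kl j in linarith)+
  also have "\<dots> = aont_entry (power_enum g (k + 1)) (power_enum g (l + 1))"
    unfolding shift_row shift_col by (rule aont_entry_mult_mult[OF primitive_element_nonzero[OF g]])
  also have "\<dots> = aont_mat g $$ (k + 1, l + 1)"
    by (rule aont_mat_index[symmetric]) (use kl in linarith)+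
  finally show "aont_mat g $$ (k + 2, ?j) = aont_mat g $$ (k + 1, l + 1)" .
qed

theorem corollary2p21:
  fixes p :: nat
  assumes "prime p" and "card (UNIV :: 'a set) = p"
  shows "\<exists>(\<tau>::'a::{field,finite}) (M::'a mat). AONT_matrix 2 p M \<and> standard_form p M \<and>
           tau_skew_symmetric p \<tau> M \<and> cyclic_mat p M"
proof -
  have p: "prime CARD('a)" using assms by simp
  obtain g :: 'a where g: "primitive_element g" using primitive_element_exists[OF p] .
  show ?thesis
    using AONT_matrix_aont_mat[OF p g] standard_form_aont_mat[OF g]
      tau_skew_symmetric_aont_mat[OF g] cyclic_mat_aont_mat[OF g] assms(2)
    by blast
qed

end
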